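(* Let $\Lambda$ be a countable index set, $\overline{a},\overline{r}$ sequences of positive reals indexed by $\Lambda$, $t\in(1,2)$ and $x\in\mathbb{R}^\Lambda$. Then $x\in k_t$ if and only if $\eta(x):=\sup_{\alpha>0}\alpha^{t-1}\|T_\alpha(x)\|_{\overline{r},1}<\infty$. More precisely, $\eta(x)\le2(1-2^{1-t})^{-1}\|x\|_{k_t}^t$ and $\|x\|_{k_t}\le\eta(x)^{1/t}$.
   Context: $\|x\|_{\overline{r},1}=\sum_{j\in\Lambda}\overline{r}_j|x_j|$ (possibly $+\infty$). For $t\in(0,2)$, $k_t=\{x\in\mathbb{R}^\Lambda:\|x\|_{k_t}<\infty\}$ with $\|x\|_{k_t}=\sup_{\alpha>0}\alpha\left(\sum_{j}\overline{a}_j^{-2}\overline{r}_j^2\mathbf{1}_{\{\overline{a}_j^{-2}\overline{r}_j\alpha<|x_j|\}}\right)^{1/t}$. For $\alpha>0$, $T_\alpha(x)_j=x_j$ if $\overline{a}_j^{-2}\overline{r}_j\alpha<|x_j|$ and $T_\alpha(x)_j=0$ otherwise. *)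

theory Defs
  imports "HOL-Analysis.Analysis"
begin

text \<open>Positive real power on extended nonnegative reals (exponent p > 0 intended):
  infinity to a positive power is infinity.\<close>
definition enn_powr :: "ennreal \<Rightarrow> real \<Rightarrow> ennreal" where
  "enn_powr x p = (if x = top then top else ennreal (enn2real x powr p))"

definition r_norm1 :: "'i set \<Rightarrow> ('i \<Rightarrow> real) \<Rightarrow> ('i \<Rightarrow> real) \<Rightarrow> ennreal" where
  "r_norm1 \<Lambda> r x = (\<Sum>\<^sub>\<infinity> j\<in>\<Lambda>. ennreal (r j * \<bar>x j\<bar>))"

definition kt_norm :: "'i set \<Rightarrow> ('i \<Rightarrow> real) \<Rightarrow> ('i \<Rightarrow> real) \<Rightarrow> real \<Rightarrow> ('i \<Rightarrow> real) \<Rightarrow> ennreal" where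
  "kt_norm \<Lambda> a r t x = (SUP \<alpha>\<in>{0<..}. ennreal \<alpha> *
      enn_powr (\<Sum>\<^sub>\<infinity> j\<in>\<Lambda>. ennreal ((a j) powi (-2) * (r j)\<^sup>2 *
                   of_bool ((a j) powi (-2) * r j * \<alpha> < \<bar>x j\<bar>))) (1 / t))"

definition kt :: "'i set \<Rightarrow> ('i \<Rightarrow> real) \<Rightarrow> ('i \<Rightarrow> real) \<Rightarrow> real \<Rightarrow> ('i \<Rightarrow> real) set" where
  "kt \<Lambda> a r t = {x. kt_norm \<Lambda> a r t x < top}"

definition T_thr :: "('i \<Rightarrow> real) \<Rightarrow> ('i \<Rightarrow> real) \<Rightarrow> real \<Rightarrow> ('i \<Rightarrow> real) \<Rightarrow> ('i \<Rightarrow> real)" where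
  "T_thr a r \<alpha> x = (\<lambda>j. if (a j) powi (-2) * r j * \<alpha> < \<bar>x j\<bar> then x j else 0)"

definition eta :: "'i set \<Rightarrow> ('i \<Rightarrow> real) \<Rightarrow> ('i \<Rightarrow> real) \<Rightarrow> real \<Rightarrow> ('i \<Rightarrow> real) \<Rightarrow> ennreal" where
  "eta \<Lambda> a r t x = (SUP \<alpha>\<in>{0<..}. ennreal (\<alpha> powr (t - 1)) * r_norm1 \<Lambda> r (T_thr a r \<alpha> x))"

end

theory Submission
  imports Defs
begin

text \<open>Put w_j = a_j^{-2} r_j, so that T_alpha keeps exactly the coordinates with |x_j| > w_j alpha,
  and let N(alpha) be the sum of w_j r_j over these coordinates; then
  ||x||_{k_t} = sup_alpha alpha N(alpha)^{1/t}. Every kept coordinate contributes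
  r_j |x_j| > alpha w_j r_j to ||T_alpha x||_{r,1}, hence alpha^t N(alpha) <= eta(x), which is the
  bound ||x||_{k_t} <= eta(x)^{1/t}. Conversely, sorting the kept coordinates into the dyadic bands
  2^m w_j alpha < |x_j| <= 2^{m+1} w_j alpha gives
  ||T_alpha x||_{r,1} <= sum_m 2^{m+1} alpha N(2^m alpha), and N(beta) <= (||x||_{k_t} / beta)^t
  turns alpha^{t-1} times this into a geometric series with ratio 2^{1-t} < 1.\<close>

lemma finite_sum_le_infsum_ennreal:
  fixes f :: "'a \<Rightarrow> ennreal"
  assumes "finite F" "F \<subseteq> A"
  shows "sum f F \<le> infsum f A"
  by (subst nonneg_infsum_complete) (use assms in \<open>auto intro!: SUP_upper\<close>)

lemma infsum_cmult_right_ennreal: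
  fixes f :: "'a \<Rightarrow> ennreal"
  shows "infsum (\<lambda>j. c * f j) A = c * infsum f A"
  by (simp add: nonneg_infsum_complete sum_distrib_left SUP_mult_left_ennreal)

lemma infsum_suminf_le_suminf_infsum_ennreal:
  fixes g :: "nat \<Rightarrow> 'a \<Rightarrow> ennreal"
  shows "infsum (\<lambda>j. \<Sum>k. g k j) A \<le> (\<Sum>k. infsum (g k) A)"
proof (subst nonneg_infsum_complete, simp, rule SUP_least, clarify)
  fix F assume "finite F" "F \<subseteq> A"
  then have "(\<Sum>k. \<Sum>j\<in>F. g k j) \<le> (\<Sum>k. infsum (g k) A)"
    by (intro suminf_le finite_sum_le_infsum_ennreal) simp_all
  then show "(\<Sum>j\<in>F. \<Sum>k. g k j) \<le> (\<Sum>k. infsum (g k) A)"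
    by (simp add: suminf_sum)
qed

lemma dyadic_bracket:
  fixes y z :: real
  assumes "0 < z" "z < y"
  obtains m :: nat where "2 ^ m * z < y" "y \<le> 2 ^ Suc m * z"
proof -
  obtain n :: nat where "y / z < 2 ^ n"
    using real_arch_pow[of 2 "y / z"] by auto
  then have "y \<le> 2 ^ n * z"
    using assms by (simp add: field_simps)
  then obtain k where "\<not> y \<le> 2 ^ k * z" "y \<le> 2 ^ Suc k * z"
    using ex_least_nat_less[of "\<lambda>i. y \<le> 2 ^ i * z" n] assms by auto
  then show ?thesis
    using that by (simp add: not_le)
qed

lemma powr_le_powr_iff:
  fixes u v t :: real
  assumes "u \<ge> 0" "v \<ge> 0" "t > 0"
  shows "u powr t \<le> v powr t \<longleftrightarrow> u \<le> v"
  using assms by (meson not_le powr_less_mono2 powr_mono2 less_imp_le)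

lemma enn_powr_ennreal [simp]: "e \<ge> 0 \<Longrightarrow> enn_powr (ennreal e) p = ennreal (e powr p)"
  by (simp add: enn_powr_def)

lemma enn_powr_top [simp]: "enn_powr top p = top"
  by (simp add: enn_powr_def)

lemma enn_powr_less_top_iff [simp]: "enn_powr x p < top \<longleftrightarrow> x < top"
  by (cases x) simp_all

lemma scaled_enn_powr_le_iff:
  fixes \<beta> k t :: real
  assumes "\<beta> > 0" "k \<ge> 0" "t > 0"
  shows "ennreal \<beta> * enn_powr n (1 / t) \<le> ennreal k
     \<longleftrightarrow> ennreal (\<beta> powr t) * n \<le> ennreal (k powr t)"
proof (cases n)
  case (real m)
  then have "ennreal \<beta> * enn_powr n (1 / t) \<le> ennreal k \<longleftrightarrow> \<beta> * m powr (1 / t) \<le> k"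
    using assms by (simp flip: ennreal_mult')
  also have "\<dots> \<longleftrightarrow> (\<beta> * m powr (1 / t)) powr t \<le> k powr t"
    using assms real by (simp add: powr_le_powr_iff)
  also have "(\<beta> * m powr (1 / t)) powr t = \<beta> powr t * m"
    using assms real by (simp add: powr_mult powr_powr)
  also have "\<beta> powr t * m \<le> k powr t \<longleftrightarrow> ennreal (\<beta> powr t) * n \<le> ennreal (k powr t)"
    using real by (simp flip: ennreal_mult')
  finally show ?thesis .
qed (use assms in \<open>simp add: ennreal_mult_top top_unique\<close>)

definition threshold :: "('i \<Rightarrow> real) \<Rightarrow> real \<Rightarrow> ('i \<Rightarrow> real) \<Rightarrow> ('i \<Rightarrow> real)" where
  "threshold w \<alpha> x = (\<lambda>j. if w j * \<alpha> < \<bar>x j\<bar> then x j else 0)"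

definition superlevel_mass ::
    "'i set \<Rightarrow> ('i \<Rightarrow> real) \<Rightarrow> ('i \<Rightarrow> real) \<Rightarrow> ('i \<Rightarrow> real) \<Rightarrow> real \<Rightarrow> ennreal" where
  "superlevel_mass \<Lambda> w r x \<beta> = (\<Sum>\<^sub>\<infinity> j\<in>\<Lambda>. ennreal (w j * r j * of_bool (w j * \<beta> < \<bar>x j\<bar>)))"

definition weak_quasinorm ::
    "'i set \<Rightarrow> ('i \<Rightarrow> real) \<Rightarrow> ('i \<Rightarrow> real) \<Rightarrow> real \<Rightarrow> ('i \<Rightarrow> real) \<Rightarrow> ennreal" where
  "weak_quasinorm \<Lambda> w r t x =
     (SUP \<beta>\<in>{0<..}. ennreal \<beta> * enn_powr (superlevel_mass \<Lambda> w r x \<beta>) (1 / t))"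

definition threshold_growth ::
    "'i set \<Rightarrow> ('i \<Rightarrow> real) \<Rightarrow> ('i \<Rightarrow> real) \<Rightarrow> real \<Rightarrow> ('i \<Rightarrow> real) \<Rightarrow> ennreal" where
  "threshold_growth \<Lambda> w r t x =
     (SUP \<alpha>\<in>{0<..}. ennreal (\<alpha> powr (t - 1)) * r_norm1 \<Lambda> r (threshold w \<alpha> x))"

lemma kt_norm_eq_weak_quasinorm:
  "kt_norm \<Lambda> a r t x = weak_quasinorm \<Lambda> (\<lambda>j. a j powi (-2) * r j) r t x"
  by (simp add: kt_norm_def weak_quasinorm_def superlevel_mass_def power2_eq_square mult.assoc)

lemma eta_eq_threshold_growth:
  "eta \<Lambda> a r t x = threshold_growth \<Lambda> (\<lambda>j. a j powi (-2) * r j) r t x"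
  by (simp add: eta_def threshold_growth_def T_thr_def threshold_def)

lemma scaled_superlevel_mass_le_threshold_norm:
  assumes "\<beta> \<ge> 0" "\<And>j. j \<in> \<Lambda> \<Longrightarrow> r j \<ge> 0"
  shows "ennreal \<beta> * superlevel_mass \<Lambda> w r x \<beta> \<le> r_norm1 \<Lambda> r (threshold w \<beta> x)"
proof -
  have "ennreal \<beta> * ennreal (w j * r j * of_bool (w j * \<beta> < \<bar>x j\<bar>))
          \<le> ennreal (r j * \<bar>threshold w \<beta> x j\<bar>)" if "j \<in> \<Lambda>" for j
  proof (cases "w j * \<beta> < \<bar>x j\<bar>")
    case True
    then have "\<beta> * (w j * r j) \<le> r j * \<bar>x j\<bar>"
      using mult_right_mono[OF less_imp_le[OF True] assms(2)[OF that]] by (simp add: ac_simps)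
    then show ?thesis
      using True assms(1) by (simp add: threshold_def ennreal_leI flip: ennreal_mult')
  qed simp
  then show ?thesis
    unfolding superlevel_mass_def r_norm1_def infsum_cmult_right_ennreal[symmetric]
    by (intro infsum_mono) (simp_all add: nonneg_summable_on_complete)
qed

lemma threshold_norm_le_dyadic_sum:
  assumes "\<alpha> > 0" and w: "\<And>j. j \<in> \<Lambda> \<Longrightarrow> w j > 0" and r: "\<And>j. j \<in> \<Lambda> \<Longrightarrow> r j \<ge> 0"
  shows "r_norm1 \<Lambda> r (threshold w \<alpha> x)
    \<le> (\<Sum>m. ennreal (2 ^ Suc m * \<alpha>) * superlevel_mass \<Lambda> w r x (2 ^ m * \<alpha>))"
proof -
  define g where "g m j = ennreal (2 ^ Suc m * \<alpha>) *
      ennreal (w j * r j * of_bool (w j * (2 ^ m * \<alpha>) < \<bar>x j\<bar>))" for m j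
  have "ennreal (r j * \<bar>threshold w \<alpha> x j\<bar>) \<le> (\<Sum>m. g m j)" if j: "j \<in> \<Lambda>" for j
  proof (cases "w j * \<alpha> < \<bar>x j\<bar>")
    case True
    obtain m where m: "2 ^ m * (w j * \<alpha>) < \<bar>x j\<bar>" "\<bar>x j\<bar> \<le> 2 ^ Suc m * (w j * \<alpha>)"
      using dyadic_bracket[of "w j * \<alpha>" "\<bar>x j\<bar>"] True w[OF j] assms(1) by auto
    have "w j * (2 ^ m * \<alpha>) < \<bar>x j\<bar>"
      using m(1) by (simp add: ac_simps)
    then have g: "g m j = ennreal (2 ^ Suc m * \<alpha> * (w j * r j))"
      using assms(1) by (simp add: g_def flip: ennreal_mult')
    have "r j * \<bar>x j\<bar> \<le> 2 ^ Suc m * \<alpha> * (w j * r j)"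
      using mult_left_mono[OF m(2) r[OF j]] by (simp add: ac_simps)
    then have "ennreal (r j * \<bar>threshold w \<alpha> x j\<bar>) \<le> g m j"
      unfolding g using True by (simp add: threshold_def ennreal_leI)
    also have "\<dots> \<le> (\<Sum>m. g m j)"
      using sum_le_suminf[of "\<lambda>m. g m j" "{m}"] by simp
    finally show ?thesis .
  qed (simp add: threshold_def)
  then have "r_norm1 \<Lambda> r (threshold w \<alpha> x) \<le> (\<Sum>\<^sub>\<infinity> j\<in>\<Lambda>. \<Sum>m. g m j)"
    unfolding r_norm1_def by (intro infsum_mono) (simp_all add: nonneg_summable_on_complete)
  also have "\<dots> \<le> (\<Sum>m. \<Sum>\<^sub>\<infinity> j\<in>\<Lambda>. g m j)"
    by (rule infsum_suminf_le_suminf_infsum_ennreal)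
  also have "\<dots> = (\<Sum>m. ennreal (2 ^ Suc m * \<alpha>) * superlevel_mass \<Lambda> w r x (2 ^ m * \<alpha>))"
    by (simp add: g_def superlevel_mass_def infsum_cmult_right_ennreal)
  finally show ?thesis .
qed

lemma dyadic_sum_le_geometric:
  fixes N :: "real \<Rightarrow> ennreal" and c t \<alpha> :: real
  assumes "1 < t" "\<alpha> > 0" "c \<ge> 0"
    and N: "\<And>\<beta>. \<beta> > 0 \<Longrightarrow> ennreal (\<beta> powr t) * N \<beta> \<le> ennreal c"
  shows "ennreal (\<alpha> powr (t - 1)) * (\<Sum>m. ennreal (2 ^ Suc m * \<alpha>) * N (2 ^ m * \<alpha>))
    \<le> ennreal (2 / (1 - 2 powr (1 - t)) * c)"
proof -
  define q :: real where "q = 2 powr (1 - t)"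
  have q: "0 < q" "q < 1"
    using assms(1) by (auto simp: q_def powr_less_one)
  have scale: "ennreal (\<alpha> powr (t - 1)) * ennreal (2 ^ Suc m * \<alpha>)
      = ennreal (2 * q ^ m) * ennreal ((2 ^ m * \<alpha>) powr t)" for m
  proof -
    have "q ^ m * (2 ^ m) powr t = 2 ^ m"
      by (simp add: q_def powr_realpow[symmetric] powr_powr powr_add[symmetric] algebra_simps)
    moreover have "\<alpha> powr (t - 1) * \<alpha> = \<alpha> powr t"
      using assms(2) by (simp add: powr_diff)
    ultimately have "\<alpha> powr (t - 1) * (2 ^ Suc m * \<alpha>) = 2 * q ^ m * (2 ^ m * \<alpha>) powr t"
      using assms(2) by (simp add: powr_mult algebra_simps)
    then show ?thesis
      using q assms(2) by (simp flip: ennreal_mult)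
  qed
  have term_le: "ennreal (\<alpha> powr (t - 1)) * (ennreal (2 ^ Suc m * \<alpha>) * N (2 ^ m * \<alpha>))
      \<le> ennreal (2 * q ^ m * c)" for m
  proof -
    have "ennreal (\<alpha> powr (t - 1)) * (ennreal (2 ^ Suc m * \<alpha>) * N (2 ^ m * \<alpha>))
        = ennreal (2 * q ^ m) * (ennreal ((2 ^ m * \<alpha>) powr t) * N (2 ^ m * \<alpha>))"
      using scale[of m] by (simp add: mult.assoc[symmetric])
    also have "\<dots> \<le> ennreal (2 * q ^ m) * ennreal c"
      using assms(2) by (intro mult_left_mono N) simp_all
    also have "\<dots> = ennreal (2 * q ^ m * c)"
      using q assms(3) by (simp add: ennreal_mult)
    finally show ?thesis .
  qed
  have "ennreal (\<alpha> powr (t - 1)) * (\<Sum>m. ennreal (2 ^ Suc m * \<alpha>) * N (2 ^ m * \<alpha>))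
      = (\<Sum>m. ennreal (\<alpha> powr (t - 1)) * (ennreal (2 ^ Suc m * \<alpha>) * N (2 ^ m * \<alpha>)))"
    by (rule ennreal_suminf_cmult[symmetric])
  also have "\<dots> \<le> (\<Sum>m. ennreal (2 * q ^ m * c))"
    by (intro suminf_le term_le) simp_all
  also have "\<dots> = ennreal (\<Sum>m. 2 * q ^ m * c)"
    using q assms(3) by (intro suminf_ennreal2 summable_mult2 summable_mult summable_geometric) auto
  also have "(\<Sum>m. 2 * q ^ m * c) = 2 / (1 - q) * c"
    using q by (simp add: suminf_mult suminf_mult2[symmetric] summable_geometric suminf_geometric)
  finally show ?thesis
    by (simp add: q_def)
qed

lemma weak_quasinorm_le_threshold_growth:
  assumes "t > 0" "\<And>j. j \<in> \<Lambda> \<Longrightarrow> r j \<ge> 0"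
  shows "weak_quasinorm \<Lambda> w r t x \<le> enn_powr (threshold_growth \<Lambda> w r t x) (1 / t)"
proof (cases "threshold_growth \<Lambda> w r t x")
  case (real e)
  have "ennreal \<beta> * enn_powr (superlevel_mass \<Lambda> w r x \<beta>) (1 / t) \<le> ennreal (e powr (1 / t))"
    if "\<beta> > 0" for \<beta>
  proof -
    have "ennreal (\<beta> powr t) * superlevel_mass \<Lambda> w r x \<beta>
        = ennreal (\<beta> powr (t - 1)) * (ennreal \<beta> * superlevel_mass \<Lambda> w r x \<beta>)"
      using that by (simp add: powr_diff mult.assoc[symmetric] flip: ennreal_mult)
    also have "\<dots> \<le> ennreal (\<beta> powr (t - 1)) * r_norm1 \<Lambda> r (threshold w \<beta> x)"
      using that assms(2) by (intro mult_left_mono scaled_superlevel_mass_le_threshold_norm) auto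
    also have "\<dots> \<le> threshold_growth \<Lambda> w r t x"
      unfolding threshold_growth_def using that by (intro SUP_upper) auto
    finally show ?thesis
      using real that assms(1) by (simp add: scaled_enn_powr_le_iff powr_powr)
  qed
  then show ?thesis
    using real unfolding weak_quasinorm_def by (auto intro: SUP_least)
qed simp

lemma threshold_growth_le_weak_quasinorm:
  assumes "1 < t" "\<And>j. j \<in> \<Lambda> \<Longrightarrow> w j > 0" "\<And>j. j \<in> \<Lambda> \<Longrightarrow> r j \<ge> 0"
  shows "threshold_growth \<Lambda> w r t x
    \<le> ennreal (2 / (1 - 2 powr (1 - t))) * enn_powr (weak_quasinorm \<Lambda> w r t x) t"
proof (cases "weak_quasinorm \<Lambda> w r t x")
  case (real k)
  have level_bound: "ennreal (\<beta> powr t) * superlevel_mass \<Lambda> w r x \<beta> \<le> ennreal (k powr t)"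
    if "\<beta> > 0" for \<beta>
  proof -
    have "ennreal \<beta> * enn_powr (superlevel_mass \<Lambda> w r x \<beta>) (1 / t) \<le> ennreal k"
      unfolding real(2)[symmetric] weak_quasinorm_def using that by (intro SUP_upper) auto
    then show ?thesis
      using that real assms(1) by (simp add: scaled_enn_powr_le_iff)
  qed
  have "ennreal (\<alpha> powr (t - 1)) * r_norm1 \<Lambda> r (threshold w \<alpha> x)
      \<le> ennreal (2 / (1 - 2 powr (1 - t)) * k powr t)" if "\<alpha> > 0" for \<alpha>
  proof -
    have "ennreal (\<alpha> powr (t - 1)) * r_norm1 \<Lambda> r (threshold w \<alpha> x)
        \<le> ennreal (\<alpha> powr (t - 1)) *
          (\<Sum>m. ennreal (2 ^ Suc m * \<alpha>) * superlevel_mass \<Lambda> w r x (2 ^ m * \<alpha>))"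
      using that assms by (intro mult_left_mono threshold_norm_le_dyadic_sum) auto
    also have "\<dots> \<le> ennreal (2 / (1 - 2 powr (1 - t)) * k powr t)"
      using that assms(1) level_bound by (intro dyadic_sum_le_geometric) auto
    finally show ?thesis .
  qed
  then have "threshold_growth \<Lambda> w r t x \<le> ennreal (2 / (1 - 2 powr (1 - t)) * k powr t)"
    unfolding threshold_growth_def by (auto intro: SUP_least)
  also have "\<dots> = ennreal (2 / (1 - 2 powr (1 - t))) * enn_powr (weak_quasinorm \<Lambda> w r t x) t"
    using real by (metis enn_powr_ennreal ennreal_mult'' powr_ge_zero)
  finally show ?thesis .
next
  case top
  have "2 powr (1 - t) < (1::real)"
    using assms(1) by (simp add: powr_less_one)
  then show ?thesis
    using top assms(1) by (simp add: ennreal_mult_top)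
qed

theorem lemma5p1:
  fixes \<Lambda> :: "'i set" and a r x :: "'i \<Rightarrow> real" and t :: real
  assumes "countable \<Lambda>"
    and "\<And>j. j \<in> \<Lambda> \<Longrightarrow> a j > 0"
    and "\<And>j. j \<in> \<Lambda> \<Longrightarrow> r j > 0"
    and "1 < t" and "t < 2"
  shows "(x \<in> kt \<Lambda> a r t \<longleftrightarrow> eta \<Lambda> a r t x < top)
       \<and> eta \<Lambda> a r t x \<le> ennreal (2 / (1 - 2 powr (1 - t))) * enn_powr (kt_norm \<Lambda> a r t x) t
       \<and> kt_norm \<Lambda> a r t x \<le> enn_powr (eta \<Lambda> a r t x) (1 / t)"
proof -
  define w where "w j = a j powi (-2) * r j" for j
  have w_pos: "w j > 0" and r_nonneg: "r j \<ge> 0" if "j \<in> \<Lambda>" for j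
    using assms(2,3)[OF that] by (simp_all add: w_def power_int_def)
  have kt_norm: "kt_norm \<Lambda> a r t x = weak_quasinorm \<Lambda> w r t x"
    unfolding w_def by (rule kt_norm_eq_weak_quasinorm)
  have eta: "eta \<Lambda> a r t x = threshold_growth \<Lambda> w r t x"
    unfolding w_def by (rule eta_eq_threshold_growth)
  have upper: "eta \<Lambda> a r t x \<le> ennreal (2 / (1 - 2 powr (1 - t))) * enn_powr (kt_norm \<Lambda> a r t x) t"
    unfolding kt_norm eta using assms(4) w_pos r_nonneg by (rule threshold_growth_le_weak_quasinorm)
  have lower: "kt_norm \<Lambda> a r t x \<le> enn_powr (eta \<Lambda> a r t x) (1 / t)"
    unfolding kt_norm eta using assms(4) r_nonneg by (intro weak_quasinorm_le_threshold_growth) auto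
  have "x \<in> kt \<Lambda> a r t \<longleftrightarrow> eta \<Lambda> a r t x < top"
  proof
    assume "x \<in> kt \<Lambda> a r t"
    then show "eta \<Lambda> a r t x < top"
      using upper by (auto simp: kt_def ennreal_mult_less_top intro: le_less_trans)
  next
    assume "eta \<Lambda> a r t x < top"
    then show "x \<in> kt \<Lambda> a r t"
      using lower by (auto simp: kt_def intro: le_less_trans)
  qed
  with upper lower show ?thesis
    by blast
qed

end
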